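(* Let $p$ be a positive integer and $d$ a positive integer. Then, as formal power series, $T_d(x)=H_p(x)^d$.
   Context: A monotonic lattice path is a sequence of lattice points $P_0P_1\ldots P_l$ with $P_{i+1}-P_i\in\{(1,0),(0,1)\}$. Fix a positive integer $p$. For integers $n\ge0$, $d>0$, $T(n,d)$ is the number of monotonic lattice paths from $(0,0)$ to $(n,pn+d)$ all of whose points other than the first and last lie strictly below the line $y=px+d$ (with $T(0,d)=1$), and $T_d(x)=\sum_{n\ge0}T(n,d)x^n$. $M(p,n)=\frac{1}{pn+n+1}\binom{pn+n+1}{n}$ (the number of monotonic lattice paths from $(0,0)$ to $(n,pn)$ with no point strictly above $y=px$) and $H_p(x)=\sum_{n\ge0}M(p,n)x^n$. *)

theory Defs
  imports Complex_Main "HOL-Computational_Algebra.Formal_Power_Series"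
begin

definition mono_lattice_path :: "(int \<times> int) list \<Rightarrow> bool" where
  "mono_lattice_path ps \<longleftrightarrow> ps \<noteq> [] \<and>
     (\<forall>i. i + 1 < length ps \<longrightarrow>
        ps ! (i+1) = (fst (ps ! i) + 1, snd (ps ! i)) \<or>
        ps ! (i+1) = (fst (ps ! i), snd (ps ! i) + 1))"

definition T_paths :: "nat \<Rightarrow> nat \<Rightarrow> nat \<Rightarrow> (int \<times> int) list set" where
  "T_paths p n d = {ps. mono_lattice_path ps \<and> hd ps = (0,0) \<and>
      last ps = (int n, int p * int n + int d) \<and>
      (\<forall>i. 0 < i \<and> i + 1 < length ps \<longrightarrow>
         snd (ps ! i) < int p * fst (ps ! i) + int d)}"

definition T :: "nat \<Rightarrow> nat \<Rightarrow> nat \<Rightarrow> nat" where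
  "T p n d = (if n = 0 then 1 else card (T_paths p n d))"

definition T_fps :: "nat \<Rightarrow> nat \<Rightarrow> real fps" where
  "T_fps p d = Abs_fps (\<lambda>n. real (T p n d))"

definition M :: "nat \<Rightarrow> nat \<Rightarrow> real" where
  "M p n = 1 / real (p*n + n + 1) * real ((p*n + n + 1) choose n)"

definition H :: "nat \<Rightarrow> real fps" where
  "H p = Abs_fps (\<lambda>n. M p n)"

end

theory Submission
  imports Defs
begin

text \<open>
  Paths ending at (n, p n + d) and staying strictly below y = p x + d in between are
  counted by their first step.  The count from a point depends only on its horizontal
  distance m to the target and its vertical gap k below the line, and satisfies the
  recursion gap_count(m+1, k+1) = gap_count(m+1, k) + gap_count(m, k+1+p), with
  gap_count(0, k) = 1 and gap_count(m+1, 0) = 0.  Hence T(n, d) = gap_count(n, d).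

  On the generating-function side, G_k = sum over n of gap_count(n, k) x^n satisfies
  G_1 = 1 + x G_{p+1}, and the recursion shows coefficientwise that G_k = G_1^k.
  Finally the closed form gap_count(m, k) = k/((p+1)m+k) C((p+1)m+k, m) (checked against
  the recursion) gives G_1 = H_p.
\<close>

lemma successively_conv_nth:
  "successively P xs \<longleftrightarrow> (\<forall>i. Suc i < length xs \<longrightarrow> P (xs ! i) (xs ! Suc i))"
proof (induction xs rule: induct_list012)
  case (3 x y zs)
  have "(\<forall>i. Q i) \<longleftrightarrow> Q 0 \<and> (\<forall>i. Q (Suc i))" for Q :: "nat \<Rightarrow> bool"
    by (metis not0_implies_Suc)
  from this [of "\<lambda>i. Suc i < length (x # y # zs) \<longrightarrow> P ((x # y # zs) ! i) ((x # y # zs) ! Suc i)"]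
  show ?case using "3.IH"(2) by simp
qed simp_all

lemma interior_conv_nth:
  "(\<forall>i. 0 < i \<and> i + 1 < length xs \<longrightarrow> P (xs ! i)) \<longleftrightarrow> (\<forall>x \<in> set (butlast (tl xs)). P x)"
  unfolding all_set_conv_all_nth by (simp add: nth_butlast nth_tl) (auto simp: gr0_conv_Suc)

definition lattice_step :: "int \<times> int \<Rightarrow> int \<times> int \<Rightarrow> bool" where
  "lattice_step a b \<longleftrightarrow> b = (fst a + 1, snd a) \<or> b = (fst a, snd a + 1)"

lemma mono_lattice_path_iff: "mono_lattice_path ps \<longleftrightarrow> ps \<noteq> [] \<and> successively lattice_step ps"
  by (simp add: mono_lattice_path_def lattice_step_def successively_conv_nth)

lemma successively_lattice_step_endpoints:
  assumes "successively lattice_step ps" and "ps \<noteq> []"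
  shows "fst (last ps) + snd (last ps) = fst (hd ps) + snd (hd ps) + int (length ps - 1)"
    and "fst (hd ps) \<le> fst (last ps)"
  using assms by (induction ps rule: induct_list012) (auto simp: lattice_step_def)

definition admissible_paths :: "(int \<times> int \<Rightarrow> bool) \<Rightarrow> int \<times> int \<Rightarrow> int \<times> int \<Rightarrow> (int \<times> int) list set" where
  "admissible_paths ok s e = {ps. ps \<noteq> [] \<and> successively lattice_step ps \<and> hd ps = s \<and> last ps = e \<and>
     (\<forall>x \<in> set (butlast (tl ps)). ok x)}"

lemma admissible_paths_self: "admissible_paths ok e e = {[e]}"
proof -
  have "ps = [e]" if "ps \<in> admissible_paths ok e e" for ps
  proof -
    have "length ps = 1"
      using that successively_lattice_step_endpoints(1) [of ps] unfolding admissible_paths_def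
      by (cases ps) auto
    then show ?thesis using that unfolding admissible_paths_def by (cases ps) auto
  qed
  then show ?thesis by (auto simp: admissible_paths_def)
qed

text \<open>Paths cannot move to the left.\<close>
lemma admissible_paths_beyond: "fst e < fst s \<Longrightarrow> admissible_paths ok s e = {}"
  using successively_lattice_step_endpoints(2) by (fastforce simp: admissible_paths_def)

definition continuations :: "(int \<times> int \<Rightarrow> bool) \<Rightarrow> int \<times> int \<Rightarrow> int \<times> int \<Rightarrow> (int \<times> int) list set" where
  "continuations ok t e = (if t = e \<or> ok t then admissible_paths ok t e else {})"

lemma admissible_paths_step:
  assumes "s \<noteq> e"
  shows "admissible_paths ok s e =
    Cons s ` (continuations ok (fst s + 1, snd s) e \<union> continuations ok (fst s, snd s + 1) e)"
    (is "_ = Cons s ` (?R \<union> ?U)")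
proof (intro equalityI subsetI)
  fix ps assume ps: "ps \<in> admissible_paths ok s e"
  then obtain qs where qs: "ps = s # qs" "qs \<noteq> []"
    using assms by (cases ps) (auto simp: admissible_paths_def split: if_splits)
  have "hd qs = e \<or> ok (hd qs)"
    using ps qs by (cases qs; cases "tl qs") (auto simp: admissible_paths_def)
  moreover have "set (butlast (tl qs)) \<subseteq> set (butlast qs)"
    by (cases qs) auto
  ultimately have "qs \<in> continuations ok (hd qs) e" "lattice_step s (hd qs)"
    using ps qs by (auto simp: admissible_paths_def continuations_def successively_Cons)
  then show "ps \<in> Cons s ` (?R \<union> ?U)" using qs(1) by (auto simp: lattice_step_def)
next
  fix ps assume "ps \<in> Cons s ` (?R \<union> ?U)"
  then obtain t qs where qs: "ps = s # qs" "lattice_step s t" "t = e \<or> ok t"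
      "qs \<in> admissible_paths ok t e"
    by (auto simp: continuations_def lattice_step_def split: if_splits)
  show "ps \<in> admissible_paths ok s e"
  proof (cases "t = e")
    case True
    then show ?thesis using qs by (auto simp: admissible_paths_self admissible_paths_def)
  next
    case False
    then show ?thesis using qs
      by (cases qs) (auto simp: admissible_paths_def successively_Cons)
  qed
qed

lemma continuations_hd: "qs \<in> continuations ok t e \<Longrightarrow> hd qs = t"
  by (auto simp: continuations_def admissible_paths_def split: if_splits)

text \<open>The two kinds of continuations are disjoint, so the first-step decomposition turns
  into the addition rule for the number of paths.\<close>
lemma card_admissible_paths_step:
  assumes "s \<noteq> e"
    and "finite (continuations ok (fst s + 1, snd s) e)" "finite (continuations ok (fst s, snd s + 1) e)"
  shows "finite (admissible_paths ok s e)"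
    and "card (admissible_paths ok s e) =
      card (continuations ok (fst s + 1, snd s) e) + card (continuations ok (fst s, snd s + 1) e)"
proof -
  have "continuations ok (fst s + 1, snd s) e \<inter> continuations ok (fst s, snd s + 1) e = {}"
    by (auto dest!: continuations_hd)
  then show "finite (admissible_paths ok s e)"
    and "card (admissible_paths ok s e) =
      card (continuations ok (fst s + 1, snd s) e) + card (continuations ok (fst s, snd s + 1) e)"
    using assms by (simp_all add: admissible_paths_step card_image card_Un_disjoint)
qed

definition below_line :: "nat \<Rightarrow> nat \<Rightarrow> int \<times> int \<Rightarrow> bool" where
  "below_line p d s \<longleftrightarrow> snd s < int p * fst s + int d"

abbreviation line_end :: "nat \<Rightarrow> nat \<Rightarrow> nat \<Rightarrow> int \<times> int" where
  "line_end p n d \<equiv> (int n, int p * int n + int d)"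

text \<open>On the vertical line x = n below the target the only continuation goes straight up.\<close>
lemma card_continuations_last_column:
  assumes "y + int k = int p * int n + int d"
  shows "finite (continuations (below_line p d) (int n, y) (line_end p n d))
    \<and> card (continuations (below_line p d) (int n, y) (line_end p n d)) = 1"
  using assms
proof (induction k arbitrary: y)
  case 0
  then show ?case by (simp add: continuations_def admissible_paths_self)
next
  case (Suc k)
  have "continuations (below_line p d) (int n + 1, y) (line_end p n d) = {}"
    by (simp add: continuations_def admissible_paths_beyond)
  moreover have "continuations (below_line p d) (int n, y) (line_end p n d) =
      admissible_paths (below_line p d) (int n, y) (line_end p n d)" "(int n, y) \<noteq> line_end p n d"
    using Suc.prems by (simp_all add: continuations_def below_line_def)
  ultimately show ?case
    using Suc.IH [of "y + 1"] Suc.prems card_admissible_paths_step [of "(int n, y)"] by simp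
qed

text \<open>gap_count p m k counts the admissible paths from a point at horizontal distance m from
  the target and at vertical distance k below the line; its recursion is the first-step
  decomposition (a step up lowers the gap by one, a step right raises it by p).\<close>
fun gap_count :: "nat \<Rightarrow> nat \<Rightarrow> nat \<Rightarrow> nat" where
  "gap_count p 0 k = 1"
| "gap_count p (Suc m) 0 = 0"
| "gap_count p (Suc m) (Suc k) = gap_count p (Suc m) k + gap_count p m (Suc k + p)"

lemma card_continuations:
  assumes "x + int m = int n" and "y + int k = int p * x + int d"
  shows "finite (continuations (below_line p d) (x, y) (line_end p n d))
    \<and> card (continuations (below_line p d) (x, y) (line_end p n d)) = gap_count p m k"
  using assms
proof (induction p m k arbitrary: x y rule: gap_count.induct)
  case (1 p k)
  then show ?case using card_continuations_last_column [of y k p n d] by simp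
next
  case (2 p m)
  then show ?case by (auto simp: continuations_def below_line_def)
next
  case (3 p m k)
  let ?ok = "below_line p d" and ?E = "line_end p n d"
  have "continuations ?ok (x, y) ?E = admissible_paths ?ok (x, y) ?E" and "(x, y) \<noteq> ?E"
    using "3.prems" by (auto simp: continuations_def below_line_def)
  moreover have "finite (continuations ?ok (x + 1, y) ?E)"
    and "card (continuations ?ok (x + 1, y) ?E) = gap_count p m (Suc k + p)"
    using "3.IH"(2) [of "x + 1" y] "3.prems" by (simp_all add: algebra_simps)
  moreover have "finite (continuations ?ok (x, y + 1) ?E)"
    and "card (continuations ?ok (x, y + 1) ?E) = gap_count p (Suc m) k"
    using "3.IH"(1) [of x "y + 1"] "3.prems" by simp_all
  ultimately show ?case
    using card_admissible_paths_step [of "(x, y)" ?E ?ok] by simp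
qed

definition ballot :: "nat \<Rightarrow> nat \<Rightarrow> nat \<Rightarrow> real" where
  "ballot p m k = (if k = 0 then (if m = 0 then 1 else 0)
     else real k / real ((p+1)*m+k) * real (((p+1)*m+k) choose m))"

text \<open>The ballot numbers satisfy the recursion of gap_count; this reduces to the absorption
  identities for binomial coefficients and a polynomial identity.\<close>
lemma ballot_rec: "ballot p (Suc m) (Suc k) = ballot p (Suc m) k + ballot p m (Suc k + p)"
proof -
  define N where "N = (p + 1) * Suc m + k"
  define c where "c = real (N choose m)"
  have N_alt: "(p + 1) * Suc m + Suc k = Suc N" "(p + 1) * m + (Suc k + p) = N"
    "N = Suc (m + (p * Suc m + k))"
    by (simp_all add: N_def algebra_simps)
  have up: "real (Suc N choose Suc m) = real (Suc N) * c / real (Suc m)"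
    using Suc_times_binomial[of m N] unfolding c_def
    by (simp add: field_simps flip: of_nat_mult)
  have right: "real (N choose Suc m) = real (Suc (p * Suc m + k)) * c / real (Suc m)"
    using Suc_times_binomial_add[of m "p * Suc m + k"] unfolding c_def N_alt(3)
    by (simp add: field_simps flip: of_nat_mult)
  have "ballot p (Suc m) (Suc k) = real (Suc k) * c / real (Suc m)"
    unfolding ballot_def N_alt(1) up by simp
  also have "\<dots> = real k / real N * real (N choose Suc m) + real (Suc k + p) / real N * c"
  proof -
    have "real (Suc k) * c * real N =
          real k * real (Suc (p * Suc m + k)) * c + real (Suc k + p) * c * real (Suc m)"
      by (simp add: N_def algebra_simps)
    moreover have "real N \<noteq> 0" unfolding of_nat_eq_0_iff by (simp add: N_def)
    ultimately show ?thesis unfolding right by (simp add: divide_simps)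
  qed
  also have "\<dots> = ballot p (Suc m) k + ballot p m (Suc k + p)"
    unfolding ballot_def N_alt(2) c_def by (simp add: N_def)
  finally show ?thesis .
qed

lemma gap_count_ballot: "real (gap_count p m k) = ballot p m k"
proof (induction p m k rule: gap_count.induct)
  case (3 p m k)
  then show ?case using ballot_rec[of p m k] by simp
qed (simp_all add: ballot_def)

definition gap_fps :: "nat \<Rightarrow> nat \<Rightarrow> real fps" where
  "gap_fps p k = Abs_fps (\<lambda>n. real (gap_count p n k))"

text \<open>For gap 1 the first step is forced to the right (unless the path is trivial), leaving a
  gap of p + 1: this is the functional equation G = 1 + x G^(p+1).\<close>
lemma gap_fps_1: "gap_fps p 1 = 1 + fps_X * gap_fps p (p + 1)"
proof (rule fps_ext)
  fix n show "fps_nth (gap_fps p 1) n = fps_nth (1 + fps_X * gap_fps p (p + 1)) n"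
    by (cases n) (simp_all add: gap_fps_def fps_X_mult_nth)
qed

text \<open>The generating function for gap k is the k-th power of the one for gap 1.  Both sides
  are compared coefficientwise by induction on the coefficient index and then on k; the
  functional equation of gap_fps_1 mirrors the recursion of gap_count.\<close>
lemma gap_fps_power: "gap_fps p 1 ^ k = gap_fps p k"
proof -
  have "fps_nth (gap_fps p 1 ^ k) n = real (gap_count p n k)" for n
  proof (induction n arbitrary: k rule: less_induct)
    case (less n)
    show ?case
    proof (induction k)
      case 0 then show ?case by (cases n) simp_all
    next
      case (Suc e)
      let ?G = "gap_fps p 1"
      have split: "?G ^ Suc e = ?G ^ e + fps_X * (gap_fps p (p + 1) * ?G ^ e)"
      proof -
        have "?G ^ Suc e = (1 + fps_X * gap_fps p (p + 1)) * ?G ^ e"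
          by (simp only: power_Suc gap_fps_1 [symmetric])
        then show ?thesis by (simp add: algebra_simps)
      qed
      show ?case
      proof (cases n)
        case 0 then show ?thesis using Suc.IH split by (simp add: fps_X_mult_nth del: power_Suc)
      next
        case (Suc m)
        have "fps_nth (gap_fps p (p + 1) * ?G ^ e) m
              = (\<Sum>i=0..m. fps_nth (gap_fps p (p + 1)) i * fps_nth (?G ^ e) (m - i))"
          by (rule fps_mult_nth)
        also have "\<dots> = (\<Sum>i=0..m. fps_nth (?G ^ (p + 1)) i * fps_nth (?G ^ e) (m - i))"
          using less Suc by (intro sum.cong) (auto simp: gap_fps_def simp del: power_Suc)
        also have "\<dots> = fps_nth (?G ^ (p + 1 + e)) m"
          by (simp only: power_add fps_mult_nth)
        also have "\<dots> = real (gap_count p m (p + 1 + e))"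
          using less Suc by (simp del: power_Suc)
        finally show ?thesis
          using Suc.IH split \<open>n = Suc m\<close> by (simp add: fps_X_mult_nth add_ac del: power_Suc)
      qed
    qed
  qed
  then show ?thesis by (intro fps_ext) (simp add: gap_fps_def)
qed

text \<open>For k = 1 the closed form is M p n, so H p is the generating function for gap 1.\<close>
lemma H_eq_gap_fps: "H p = gap_fps p 1"
  unfolding H_def gap_fps_def gap_count_ballot M_def ballot_def by (simp add: algebra_simps)

lemma T_paths_eq: "T_paths p n d = admissible_paths (below_line p d) (0, 0) (line_end p n d)"
  unfolding admissible_paths_def interior_conv_nth [symmetric]
  by (auto simp: T_paths_def mono_lattice_path_iff below_line_def)

lemma T_eq_gap_count:
  assumes "0 < d"
  shows "T p n d = gap_count p n d"
proof (cases "n = 0")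
  case False
  have "continuations (below_line p d) (0, 0) (line_end p n d) = T_paths p n d"
    using assms by (simp add: continuations_def below_line_def T_paths_eq)
  then show ?thesis using False card_continuations [of 0 n n 0 d p] by (simp add: T_def)
qed (simp add: T_def)

text \<open>Main theorem: T_d = H_p^d.\<close>
theorem mainTheorem8:
  fixes p d :: nat
  assumes "p > 0" and "d > 0"
  shows "T_fps p d = H p ^ d"
proof -
  have "T_fps p d = gap_fps p d"
    using T_eq_gap_count [OF assms(2)] by (simp add: T_fps_def gap_fps_def)
  also have "\<dots> = H p ^ d"
    unfolding H_eq_gap_fps gap_fps_power ..
  finally show ?thesis .
qed

end
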